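(* For each integer $N\ge0$, the set of series $X=\sum_{p,q\ge0}x_{p,q}a^pb^q\in\widehat{\mathcal{A}}$ such that there exist $R>1$ and $C_R>0$ with $$|x_{p,q}|\le C_RR^{p+q}\frac{(p+q)!}{p!}(1+p+q)^N\qquad\forall p,q\ge0$$ is equal to the algebra $\tilde{\mathcal{A}}_{conv.}$.
   Context: $\widehat{\mathcal{A}}$ is the algebra of formal power series $\sum_{p,q\ge0}\gamma_{p,q}a^pb^q$ in variables $a,b$ with $ab-ba=b^2$ (the $(a,b)$-adic completion of the polynomial algebra with this relation). $\tilde{\mathcal{A}}_{conv.}\subset\widehat{\mathcal{A}}$ is the subalgebra of series with $|\gamma_{p,q}|\le C_RR^{p+q}q!$ for some $R>1$, $C_R>0$. *)

theory Defs
  imports Complex_Main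
begin

text \<open>An element of the completed algebra hat A (generators a, b with ab - ba = b^2)
is identified with its family of coefficients in the normally ordered basis a^p b^q:
X = sum over p,q of x p q times a^p b^q.\<close>

type_synonym Ahat = "nat \<Rightarrow> nat \<Rightarrow> complex"

definition A_conv :: "Ahat set" where
  "A_conv = {x. \<exists>R>1. \<exists>C>0. \<forall>p q. norm (x p q) \<le> C * R ^ (p + q) * fact q}"

end

theory Submission
  imports Defs
begin

text \<open>Both sets are growth classes: coefficients bounded by C R^(p+q) times a weight.
Such a class does not change when the weight is altered by a factor lying between 1 and
an exponential K^(p+q), since the exponential is absorbed into R.  The weight
(p+q)!/p! = q! binom(p+q, q) lies between q! and 2^(p+q) q!, and the polynomial factor
(1+p+q)^N lies between 1 and (2^N)^(p+q).\<close>

definition growth_class :: "(nat \<Rightarrow> nat \<Rightarrow> real) \<Rightarrow> (nat \<Rightarrow> nat \<Rightarrow> 'a::real_normed_vector) set"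
  where "growth_class w = {x. \<exists>R>1. \<exists>C>0. \<forall>p q. norm (x p q) \<le> C * R ^ (p + q) * w p q}"

lemma growth_class_mono:
  assumes "\<And>p q. v p q \<le> w p q"
  shows "growth_class v \<subseteq> growth_class w"
proof
  fix x :: "nat \<Rightarrow> nat \<Rightarrow> 'a" assume "x \<in> growth_class v"
  then obtain R C where "R > 1" "C > 0" and bound: "\<And>p q. norm (x p q) \<le> C * R ^ (p + q) * v p q"
    unfolding growth_class_def by blast
  have "norm (x p q) \<le> C * R ^ (p + q) * w p q" for p q
  proof -
    have "norm (x p q) \<le> C * R ^ (p + q) * v p q" by (rule bound)
    also have "\<dots> \<le> C * R ^ (p + q) * w p q"
      using assms \<open>R > 1\<close> \<open>C > 0\<close> by (intro mult_left_mono) auto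
    finally show ?thesis .
  qed
  with \<open>R > 1\<close> \<open>C > 0\<close> show "x \<in> growth_class w"
    unfolding growth_class_def by blast
qed

lemma growth_class_absorbs_exponential:
  assumes "K \<ge> 1" and "\<And>p q. w p q \<le> K ^ (p + q) * v p q"
  shows "growth_class w \<subseteq> growth_class v"
proof
  fix x :: "nat \<Rightarrow> nat \<Rightarrow> 'a" assume "x \<in> growth_class w"
  then obtain R C where "R > 1" "C > 0" and bound: "\<And>p q. norm (x p q) \<le> C * R ^ (p + q) * w p q"
    unfolding growth_class_def by blast
  have "norm (x p q) \<le> C * (R * K) ^ (p + q) * v p q" for p q
  proof -
    have "norm (x p q) \<le> C * R ^ (p + q) * w p q" by (rule bound)
    also have "\<dots> \<le> C * R ^ (p + q) * (K ^ (p + q) * v p q)"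
      using assms(2) \<open>R > 1\<close> \<open>C > 0\<close> by (intro mult_left_mono) auto
    finally show ?thesis by (simp add: power_mult_distrib mult_ac)
  qed
  moreover have "R * K > 1"
  proof -
    have "R \<le> R * K" using \<open>R > 1\<close> \<open>K \<ge> 1\<close> mult_left_mono[of 1 K R] by simp
    with \<open>R > 1\<close> show ?thesis by linarith
  qed
  ultimately show "x \<in> growth_class v"
    using \<open>C > 0\<close> unfolding growth_class_def by blast
qed

lemma fact_add_div_fact: "(fact (p + q) / fact p :: real) = fact q * real (p + q choose q)"
  using fact_binomial[of q "p + q", where 'a = real] by simp

lemma fact_le_fact_add_div_fact: "(fact q :: real) \<le> fact (p + q) / fact p"
proof -
  have "1 \<le> real (p + q choose q)" by (simp add: Suc_leI)
  then show ?thesis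
    unfolding fact_add_div_fact by (simp add: mult_le_cancel_left1)
qed

lemma fact_add_div_fact_le: "(fact (p + q) / fact p :: real) \<le> 2 ^ (p + q) * fact q"
proof -
  have "real (p + q choose q) \<le> 2 ^ (p + q)"
    by (metis binomial_le_pow2 of_nat_le_iff of_nat_numeral of_nat_power)
  then show ?thesis
    unfolding fact_add_div_fact by (simp add: mult.commute mult_right_mono)
qed

lemma one_plus_power_le_exponential: "(1 + real n) ^ N \<le> (2 ^ N) ^ n"
proof -
  have "1 + real n \<le> 2 ^ n"
    using less_exp[of n] by (metis Suc_leI of_nat_Suc of_nat_le_iff of_nat_numeral of_nat_power)
  then have "(1 + real n) ^ N \<le> (2 ^ n) ^ N" by (intro power_mono) auto
  then show ?thesis by (simp add: power_mult[symmetric] mult.commute)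
qed

theorem lemma1p1p6:
  fixes N :: nat
  shows "{x :: Ahat. \<exists>R>(1::real). \<exists>C>(0::real). \<forall>p q.
            norm (x p q) \<le> C * R ^ (p + q) * (fact (p + q) / fact p) * (1 + real p + real q) ^ N}
         = A_conv"
proof -
  define w where "w p q = fact (p + q) / fact p * (1 + real p + real q) ^ N" for p q
  have upper: "w p q \<le> (2 * 2 ^ N) ^ (p + q) * fact q" for p q
  proof -
    have "w p q \<le> 2 ^ (p + q) * fact q * (2 ^ N) ^ (p + q)"
      unfolding w_def using fact_add_div_fact_le one_plus_power_le_exponential[of "p + q" N]
      by (intro mult_mono) (auto simp: add.assoc)
    then show ?thesis by (simp add: power_mult_distrib mult_ac)
  qed
  have lower: "fact q \<le> w p q" for p q
  proof -
    have "(fact q :: real) \<le> fact (p + q) / fact p * 1"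
      using fact_le_fact_add_div_fact by simp
    also have "\<dots> \<le> w p q"
      unfolding w_def by (intro mult_left_mono one_le_power) auto
    finally show ?thesis .
  qed
  have "growth_class w \<subseteq> growth_class (\<lambda>p q. fact q)"
  proof (rule growth_class_absorbs_exponential[where K = "2 * 2 ^ N"])
    show "(1::real) \<le> 2 * 2 ^ N" using one_le_power[of "2::real" N] by linarith
  qed (rule upper)
  moreover have "growth_class (\<lambda>p q. fact q) \<subseteq> growth_class w"
    using lower by (rule growth_class_mono)
  ultimately have "growth_class w = growth_class (\<lambda>p q. fact q)" by (rule equalityI)
  then show ?thesis
    unfolding A_conv_def growth_class_def w_def by (simp add: mult.assoc)
qed

end
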